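(* Let $d\ge 2$, let $\Omega=(a_1,b_1)\times\cdots\times(a_d,b_d)$, and let $\mathcal{T}_{\mathbf h}$, $\mathcal{T}_{\mathbf h}'$, $\mathcal S_{\mathbf h}$ and the matrices $\widetilde{D}_{ij,0},\widehat{D}_{ij,0},\overline{D}_{ij,0}\in\mathbb R^{J_0\times J_0}$ be as described in the context. Then for all $i,j\in\{1,\dots,d\}$ the matrix $\widetilde{D}_{ij,0}-\widehat{D}_{ij,0}$ is symmetric positive definite. Furthermore, $-\widehat{D}_{ij,0} > -\overline{D}_{ij,0} > -\widetilde{D}_{ij,0}$ for all $i,j\in\{1,\dots,d\}$, where for matrices $X>Y$ means that $X-Y$ is symmetric positive definite.
   Context: Grid: for integers $J_i\ge 2$ put $h_i=(b_i-a_i)/(J_i-1)$, $\mathbf h=(h_1,\dots,h_d)$, and nodes $\mathbf x_\alpha=(a_1+(\alpha_1-1)h_1,\dots,a_d+(\alpha_d-1)h_d)$ for multi-indices $\alpha$ with $1\le\alpha_i\le J_i$; $\mathcal T_{\mathbf h}$ is the set of these nodes. The extended mesh is $\mathcal T_{\mathbf h}'=\mathcal T_{\mathbf h}\cup\{\mathbf y\pm 2h_i\mathbf e_i:\mathbf y\in\mathcal T_{\mathbf h}\cap\Omega,\ 1\le i\le d\}$ (the added points, lying outside $\overline\Omega$, are ghost points); $\{\mathbf e_i\}$ is the canonical basis. For a grid function $V$ on $\mathcal T_{\mathbf h}'$ write $V_\alpha=V(\mathbf x_\alpha)$ and define $\delta^+_{x_i,h_i}V(\mathbf x)=(V(\mathbf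 x+h_i\mathbf e_i)-V(\mathbf x))/h_i$, $\delta^-_{x_i,h_i}V(\mathbf x)=(V(\mathbf x)-V(\mathbf x-h_i\mathbf e_i))/h_i$, $\delta^2_{x_i,h_i}V(\mathbf x)=(V(\mathbf x-h_i\mathbf e_i)-2V(\mathbf x)+V(\mathbf x+h_i\mathbf e_i))/h_i^2$, $\Delta_{\mathbf h}=\sum_{i=1}^d\delta^2_{x_i,h_i}$, and $\widehat\delta^2_{x_i,x_j;h_i,h_j}=\tfrac12(\delta^-_{x_j,h_j}\delta^+_{x_i,h_i}+\delta^+_{x_j,h_j}\delta^-_{x_i,h_i})$, $\widetilde\delta^2_{x_i,x_j;h_i,h_j}=\tfrac12(\delta^+_{x_j,h_j}\delta^+_{x_i,h_i}+\delta^-_{x_j,h_j}\delta^-_{x_i,h_i})$, $\overline\delta^2_{x_i,x_j;h_i,h_j}=\tfrac12(\widehat\delta^2_{x_i,x_j;h_i,h_j}+\widetilde\delta^2_{x_i,x_j;h_i,h_j})$. Let $\mathcal S_{\mathbf h}$ be the set of boundary nodes $\mathbf x_\alpha\in\mathcal T_{\mathbf h}\cap\partial\Omega$ such that $\mathbf x_\alpha+h_i\mathbf e_i\in\mathcal T_{\mathbf h}\cap\Omega$ or $\mathbf x_\alpha-h_i\mathbf e_i\in\mathcal T_{\mathbf h}\cap\Omega$ for some $i$. Let $J_0=|\mathcal T_{\mathbf h}\cap\Omega|$. Every vector in $\mathbb R^{J_0}$ (values at interior nodes) is extended to a grid function $V$ on $\mathcal T_{\mathbf h}'$ by setting $V=0$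 on $\mathcal T_{\mathbf h}\cap\partial\Omega$ and choosing the ghost values so that $\Delta_{\mathbf h}V_\alpha=0$ for all $\mathbf x_\alpha\in\mathcal S_{\mathbf h}$. Then $\widetilde D_{ij,0}$, $\widehat D_{ij,0}$, $\overline D_{ij,0}$ denote the $J_0\times J_0$ matrices representing the linear maps $V\mapsto(\widetilde\delta^2_{x_i,x_j;h_i,h_j}V_\alpha)_{\mathbf x_\alpha\in\mathcal T_{\mathbf h}\cap\Omega}$, $V\mapsto(\widehat\delta^2_{x_i,x_j;h_i,h_j}V_\alpha)$, $V\mapsto(\overline\delta^2_{x_i,x_j;h_i,h_j}V_\alpha)$ respectively, with this extension built in. *)

theory Defs
  imports "HOL-Analysis.Analysis"
begin

text \<open>Domain Omega = box a b (open box), boundary = frontier (box a b).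
  Points of R^d are real^'n with CARD('n) = d; e_i = axis i 1.\<close>

definition hstep :: "real^'n \<Rightarrow> real^'n \<Rightarrow> ('n \<Rightarrow> nat) \<Rightarrow> 'n \<Rightarrow> real" where
  "hstep a b J i = (b$i - a$i) / (real (J i) - 1)"

definition node :: "real^'n \<Rightarrow> real^'n \<Rightarrow> ('n \<Rightarrow> nat) \<Rightarrow> ('n \<Rightarrow> nat) \<Rightarrow> real^'n" where
  "node a b J \<alpha> = (\<chi> i. a$i + (real (\<alpha> i) - 1) * hstep a b J i)"

definition mesh :: "real^'n \<Rightarrow> real^'n \<Rightarrow> ('n \<Rightarrow> nat) \<Rightarrow> (real^'n) set" where
  "mesh a b J = {node a b J \<alpha> | \<alpha>. \<forall>i. 1 \<le> \<alpha> i \<and> \<alpha> i \<le> J i}"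

definition inodes :: "real^'n \<Rightarrow> real^'n \<Rightarrow> ('n \<Rightarrow> nat) \<Rightarrow> (real^'n) set" where
  "inodes a b J = mesh a b J \<inter> box a b"

definition ext_mesh :: "real^'n \<Rightarrow> real^'n \<Rightarrow> ('n \<Rightarrow> nat) \<Rightarrow> (real^'n) set" where
  "ext_mesh a b J = mesh a b J
     \<union> {y + (2 * hstep a b J i) *\<^sub>R axis i 1 | y i. y \<in> inodes a b J}
     \<union> {y - (2 * hstep a b J i) *\<^sub>R axis i 1 | y i. y \<in> inodes a b J}"

definition dp :: "('n \<Rightarrow> real) \<Rightarrow> 'n \<Rightarrow> (real^'n \<Rightarrow> real) \<Rightarrow> real^'n \<Rightarrow> real" where
  "dp h i V x = (V (x + h i *\<^sub>R axis i 1) - V x) / h i"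

definition dm :: "('n \<Rightarrow> real) \<Rightarrow> 'n \<Rightarrow> (real^'n \<Rightarrow> real) \<Rightarrow> real^'n \<Rightarrow> real" where
  "dm h i V x = (V x - V (x - h i *\<^sub>R axis i 1)) / h i"

definition d2 :: "('n \<Rightarrow> real) \<Rightarrow> 'n \<Rightarrow> (real^'n \<Rightarrow> real) \<Rightarrow> real^'n \<Rightarrow> real" where
  "d2 h i V x = (V (x - h i *\<^sub>R axis i 1) - 2 * V x + V (x + h i *\<^sub>R axis i 1)) / (h i)^2"

definition lap_h :: "('n::finite \<Rightarrow> real) \<Rightarrow> (real^'n \<Rightarrow> real) \<Rightarrow> real^'n \<Rightarrow> real" where
  "lap_h h V x = (\<Sum>i\<in>UNIV. d2 h i V x)"

definition d2hat :: "('n \<Rightarrow> real) \<Rightarrow> 'n \<Rightarrow> 'n \<Rightarrow> (real^'n \<Rightarrow> real) \<Rightarrow> real^'n \<Rightarrow> real" where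
  "d2hat h i j V x = (dm h j (dp h i V) x + dp h j (dm h i V) x) / 2"

definition d2tilde :: "('n \<Rightarrow> real) \<Rightarrow> 'n \<Rightarrow> 'n \<Rightarrow> (real^'n \<Rightarrow> real) \<Rightarrow> real^'n \<Rightarrow> real" where
  "d2tilde h i j V x = (dp h j (dp h i V) x + dm h j (dm h i V) x) / 2"

definition d2bar :: "('n \<Rightarrow> real) \<Rightarrow> 'n \<Rightarrow> 'n \<Rightarrow> (real^'n \<Rightarrow> real) \<Rightarrow> real^'n \<Rightarrow> real" where
  "d2bar h i j V x = (d2hat h i j V x + d2tilde h i j V x) / 2"

definition Snodes :: "real^'n \<Rightarrow> real^'n \<Rightarrow> ('n \<Rightarrow> nat) \<Rightarrow> (real^'n) set" where
  "Snodes a b J = {x \<in> mesh a b J \<inter> frontier (box a b).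
      \<exists>i. x + hstep a b J i *\<^sub>R axis i 1 \<in> inodes a b J
        \<or> x - hstep a b J i *\<^sub>R axis i 1 \<in> inodes a b J}"

text \<open>Values of V off the extended mesh are irrelevant.\<close>
definition ghost_ext :: "real^'n::finite \<Rightarrow> real^'n \<Rightarrow> ('n \<Rightarrow> nat) \<Rightarrow> (real^'n \<Rightarrow> real) \<Rightarrow> (real^'n \<Rightarrow> real) \<Rightarrow> bool" where
  "ghost_ext a b J v V \<longleftrightarrow>
     (\<forall>x\<in>inodes a b J. V x = v x) \<and>
     (\<forall>x\<in>mesh a b J \<inter> frontier (box a b). V x = 0) \<and>
     (\<forall>x\<in>Snodes a b J. lap_h (hstep a b J) V x = 0)"

definition extend :: "real^'n::finite \<Rightarrow> real^'n \<Rightarrow> ('n \<Rightarrow> nat) \<Rightarrow> (real^'n \<Rightarrow> real) \<Rightarrow> (real^'n \<Rightarrow> real)" where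
  "extend a b J v = (SOME V. ghost_ext a b J v V)"

text \<open>Matrix (indexed by interior nodes) of the linear map v \<mapsto> (op (extension of v) x)_x:
  entry (x,y) is the image of the y-th unit vector evaluated at x.\<close>
definition opmat :: "real^'n::finite \<Rightarrow> real^'n \<Rightarrow> ('n \<Rightarrow> nat)
     \<Rightarrow> ((real^'n \<Rightarrow> real) \<Rightarrow> real^'n \<Rightarrow> real) \<Rightarrow> real^'n \<Rightarrow> real^'n \<Rightarrow> real" where
  "opmat a b J op x y = op (extend a b J (\<lambda>z. if z = y then 1 else 0)) x"

definition Dhat0 where "Dhat0 a b J i j = opmat a b J (d2hat (hstep a b J) i j)"
definition Dtilde0 where "Dtilde0 a b J i j = opmat a b J (d2tilde (hstep a b J) i j)"
definition Dbar0 where "Dbar0 a b J i j = opmat a b J (d2bar (hstep a b J) i j)"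

definition spd_on :: "'a set \<Rightarrow> ('a \<Rightarrow> 'a \<Rightarrow> real) \<Rightarrow> bool" where
  "spd_on I M \<longleftrightarrow> (\<forall>x\<in>I. \<forall>y\<in>I. M x y = M y x) \<and>
     (\<forall>v. (\<exists>x\<in>I. v x \<noteq> 0) \<longrightarrow> (\<Sum>x\<in>I. \<Sum>y\<in>I. v x * M x y * v y) > 0)"

end

theory Submission
  imports Defs "HOL-Library.Groups_Big_Fun"
begin

(*
  In each direction \<delta>\<^sup>+ - \<delta>\<^sup>- = h \<delta>\<^sup>2, so at interior nodes Dtilde0 - Dhat0 is the
  operator h\<^sub>i h\<^sub>j \<delta>\<^sup>2\<^sub>i \<delta>\<^sup>2\<^sub>j / 2 applied to the extended grid function. For i \<noteq> j its
  stencil stays in the mesh, where the extension is just v extended by zero. For i = j it reaches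
  the ghost points, but the ghost condition (the discrete Laplacian vanishes at the boundary node
  in between) says precisely that \<delta>\<^sup>2\<^sub>i of the extension vanishes at that node, so the operator
  becomes \<delta>\<^sup>2\<^sub>i \<chi> \<delta>\<^sup>2\<^sub>i with \<chi> the cut-off to interior nodes. Summing by parts twice on the
  whole lattice turns the quadratic forms into sums of squares of \<chi> \<delta>\<^sup>2\<^sub>i v and of
  \<delta>\<^sup>+\<^sub>j \<delta>\<^sup>+\<^sub>i v, which vanish only for v = 0 because a finitely supported function with
  vanishing forward difference is zero. Since Dbar0 is the mean of Dhat0 and Dtilde0, the other
  two differences are half of Dtilde0 - Dhat0.
*)


section \<open>Finite differences of finitely supported functions\<close>

definition finite_support :: "('a \<Rightarrow> real) \<Rightarrow> bool" where
  "finite_support u \<longleftrightarrow> finite {x. u x \<noteq> 0}"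

definition fwd_diff :: "'a::ab_group_add \<Rightarrow> ('a \<Rightarrow> real) \<Rightarrow> 'a \<Rightarrow> real" where
  "fwd_diff e u x = u (x + e) - u x"

definition second_diff :: "'a::ab_group_add \<Rightarrow> ('a \<Rightarrow> real) \<Rightarrow> 'a \<Rightarrow> real" where
  "second_diff e u x = u (x - e) - 2 * u x + u (x + e)"

definition zero_outside :: "'a set \<Rightarrow> ('a \<Rightarrow> real) \<Rightarrow> 'a \<Rightarrow> real" where
  "zero_outside I u x = (if x \<in> I then u x else 0)"

lemma second_diff_uminus: "second_diff (- e) = second_diff e"
  by (simp add: fun_eq_iff second_diff_def)

lemma second_diff_cong:
  "u (x - e) = w (x - e) \<Longrightarrow> u x = w x \<Longrightarrow> u (x + e) = w (x + e) \<Longrightarrow> second_diff e u x = second_diff e w x"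
  by (simp add: second_diff_def)

lemma fwd_diff_second_diff_commute: "fwd_diff d (second_diff e u) = second_diff e (fwd_diff d u)"
  by (simp add: fun_eq_iff fwd_diff_def second_diff_def algebra_simps)

lemma finite_support_shift:
  fixes u :: "'a::ab_group_add \<Rightarrow> real"
  assumes "finite_support u"
  shows "finite_support (\<lambda>x. u (x + e))"
proof -
  have "{x. u (x + e) \<noteq> 0} = (\<lambda>y. y - e) ` {y. u y \<noteq> 0}"
    by (auto simp: image_iff) (metis add_diff_cancel_right')
  then show ?thesis using assms by (simp add: finite_support_def)
qed

lemma finite_support_diff:
  "finite_support u \<Longrightarrow> finite_support w \<Longrightarrow> finite_support (\<lambda>x. u x - w x)"
  unfolding finite_support_def by (rule finite_subset[of _ "{x. u x \<noteq> 0} \<union> {x. w x \<noteq> 0}"]) auto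

lemma finite_support_mult: "finite_support u \<Longrightarrow> finite_support (\<lambda>x. u x * f x)"
  unfolding finite_support_def by (rule finite_subset[of _ "{x. u x \<noteq> 0}"]) auto

lemma finite_support_fwd_diff:
  assumes "finite_support u"
  shows "finite_support (fwd_diff e u)"
  using finite_support_diff[OF finite_support_shift[OF assms] assms] by (simp add: fwd_diff_def[abs_def])

lemma finite_support_zero_outside: "finite I \<Longrightarrow> finite_support (zero_outside I u)"
  unfolding finite_support_def zero_outside_def by (rule finite_subset[of _ I]) auto

lemma Sum_any_shift:
  fixes f :: "'a::ab_group_add \<Rightarrow> real"
  shows "Sum_any (\<lambda>x. f (x + e)) = Sum_any f"
proof (rule Sum_any.reindex_cong)
  show "bij (\<lambda>x::'a. x - e)" by (rule bij_betwI[of _ _ _ "\<lambda>x. x + e"]) auto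
qed (simp add: o_def)

lemma Sum_any_diff:
  assumes "finite_support f" "finite_support g"
  shows "Sum_any (\<lambda>x. f x - g x) = Sum_any f - Sum_any g"
proof -
  let ?S = "{x. f x \<noteq> 0} \<union> {x. g x \<noteq> 0}"
  have "finite ?S" using assms by (simp add: finite_support_def)
  then show ?thesis
    by (simp add: Sum_any.expand_superset[of ?S] sum_subtractf subset_iff)
qed

lemma Sum_any_divide: "Sum_any (\<lambda>x. f x / c) = Sum_any f / (c :: real)"
proof (cases "c = 0")
  case False
  then have "{x. f x / c \<noteq> 0} = {x. f x \<noteq> 0}" by auto
  then show ?thesis by (simp add: Sum_any.expand_set sum_divide_distrib)
qed simp

lemma Sum_any_zero_outside_mult:
  assumes "finite I"
  shows "Sum_any (\<lambda>x. zero_outside I u x * f x) = (\<Sum>x\<in>I. u x * f x)"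
  using assms by (simp add: Sum_any.expand_superset[of I] zero_outside_def subset_iff cong: sum.cong)

lemma Sum_any_square_nonneg: "0 \<le> Sum_any (\<lambda>x. f x * f x :: real)"
  by (simp add: Sum_any.expand_set sum_nonneg)

lemma Sum_any_square_eq_0:
  assumes "finite_support f" "Sum_any (\<lambda>x. f x * f x) = 0"
  shows "f = (\<lambda>_. 0)"
proof -
  have "\<forall>x\<in>{x. f x \<noteq> 0}. f x * f x = 0"
    using assms sum_nonneg_eq_0_iff[of "{x. f x \<noteq> 0}" "\<lambda>x. f x * f x"]
    by (simp add: finite_support_def Sum_any.expand_superset[of "{x. f x \<noteq> 0}"] subset_iff)
  then show ?thesis by auto
qed

lemma fwd_diff_eq_0_imp_zero:
  fixes u :: "'a::real_vector \<Rightarrow> real"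
  assumes u: "finite_support u" and "e \<noteq> 0" and const: "fwd_diff e u = (\<lambda>_. 0)"
  shows "u = (\<lambda>_. 0)"
proof (rule ccontr)
  assume "u \<noteq> (\<lambda>_. 0)"
  then obtain x where "u x \<noteq> 0" by auto
  have "u (x + real n *\<^sub>R e) = u x" for n
  proof (induction n)
    case (Suc n)
    have "u (x + real (Suc n) *\<^sub>R e) = u (x + real n *\<^sub>R e)"
      using fun_cong[OF const, of "x + real n *\<^sub>R e"] by (simp add: fwd_diff_def algebra_simps)
    then show ?case using Suc.IH by simp
  qed simp
  then have "range (\<lambda>n. x + real n *\<^sub>R e) \<subseteq> {x. u x \<noteq> 0}"
    using \<open>u x \<noteq> 0\<close> by auto
  moreover have "inj (\<lambda>n. x + real n *\<^sub>R e)"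
    using \<open>e \<noteq> 0\<close> by (auto intro!: injI)
  ultimately have "finite (UNIV :: nat set)"
    using u unfolding finite_support_def by (metis finite_imageD finite_subset)
  then show False by simp
qed

lemma summation_by_parts:
  assumes w: "finite_support w"
  shows "Sum_any (\<lambda>x. w x * second_diff e u x) = - Sum_any (\<lambda>x. fwd_diff e w x * fwd_diff e u x)"
proof -
  have "Sum_any (\<lambda>x. w x * second_diff e u x)
      = Sum_any (\<lambda>x. w x * fwd_diff e u x - w x * fwd_diff e u (x - e))"
    by (simp add: second_diff_def fwd_diff_def algebra_simps)
  also have "\<dots> = Sum_any (\<lambda>x. w x * fwd_diff e u x) - Sum_any (\<lambda>x. w (x + e) * fwd_diff e u x)"
    using Sum_any_shift[of "\<lambda>x. w x * fwd_diff e u (x - e)" e]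
    by (simp add: Sum_any_diff finite_support_mult w)
  also have "\<dots> = - Sum_any (\<lambda>x. fwd_diff e w x * fwd_diff e u x)"
    unfolding fwd_diff_def[of e w] left_diff_distrib
    by (subst Sum_any_diff) (simp_all add: finite_support_mult w finite_support_shift)
  finally show ?thesis .
qed

lemma Sum_any_second_diff_commute:
  assumes "finite_support u" "finite_support w"
  shows "Sum_any (\<lambda>x. u x * second_diff e w x) = Sum_any (\<lambda>x. second_diff e u x * w x)"
  using summation_by_parts[OF assms(1)] summation_by_parts[OF assms(2)]
  by (simp add: mult.commute)

lemma Sum_any_mixed_second_diff:
  assumes u: "finite_support u"
  shows "Sum_any (\<lambda>x. u x * second_diff d (second_diff e w) x)
       = Sum_any (\<lambda>x. fwd_diff e (fwd_diff d u) x * fwd_diff e (fwd_diff d w) x)"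
proof -
  have "Sum_any (\<lambda>x. u x * second_diff d (second_diff e w) x)
      = - Sum_any (\<lambda>x. fwd_diff d u x * second_diff e (fwd_diff d w) x)"
    by (simp add: summation_by_parts u fwd_diff_second_diff_commute)
  also have "\<dots> = Sum_any (\<lambda>x. fwd_diff e (fwd_diff d u) x * fwd_diff e (fwd_diff d w) x)"
    by (simp add: summation_by_parts u finite_support_fwd_diff)
  finally show ?thesis .
qed

lemma Sum_any_mixed_second_diff_pos:
  fixes w :: "'a::real_vector \<Rightarrow> real"
  assumes w: "finite_support w" and "w \<noteq> (\<lambda>_. 0)" "d \<noteq> 0" "e \<noteq> 0"
  shows "Sum_any (\<lambda>x. w x * second_diff d (second_diff e w) x) > 0"
proof -
  let ?D = "fwd_diff e (fwd_diff d w)"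
  have D: "finite_support ?D" by (intro finite_support_fwd_diff w)
  have "?D \<noteq> (\<lambda>_. 0)"
    using fwd_diff_eq_0_imp_zero[OF finite_support_fwd_diff[OF w] \<open>e \<noteq> 0\<close>]
      fwd_diff_eq_0_imp_zero[OF w \<open>d \<noteq> 0\<close>] \<open>w \<noteq> (\<lambda>_. 0)\<close> by blast
  then have "Sum_any (\<lambda>x. ?D x * ?D x) \<noteq> 0" using Sum_any_square_eq_0[OF D] by blast
  then show ?thesis
    using Sum_any_square_nonneg[of ?D] Sum_any_mixed_second_diff[OF w, of d e w] by simp
qed

lemma Sum_any_second_diff_restricted:
  assumes I: "finite I"
  shows "Sum_any (\<lambda>x. zero_outside I u x * second_diff e (zero_outside I (second_diff e w)) x)
       = Sum_any (\<lambda>x. zero_outside I (second_diff e (zero_outside I u)) x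
                      * zero_outside I (second_diff e w) x)"
proof -
  have "Sum_any (\<lambda>x. zero_outside I u x * second_diff e (zero_outside I (second_diff e w)) x)
      = Sum_any (\<lambda>x. second_diff e (zero_outside I u) x * zero_outside I (second_diff e w) x)"
    by (intro Sum_any_second_diff_commute finite_support_zero_outside I)
  also have "\<dots> = Sum_any (\<lambda>x. zero_outside I (second_diff e (zero_outside I u)) x
                              * zero_outside I (second_diff e w) x)"
    by (rule Sum_any.cong) (simp add: zero_outside_def)
  finally show ?thesis .
qed

lemma Sum_any_second_diff_restricted_pos:
  fixes w :: "'a::real_vector \<Rightarrow> real"
  assumes I: "finite I" and "e \<noteq> 0" and nonzero: "\<exists>x\<in>I. w x \<noteq> 0"
  shows "Sum_any (\<lambda>x. zero_outside I w x * second_diff e (zero_outside I (second_diff e (zero_outside I w))) x) > 0"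
proof -
  let ?W = "zero_outside I w"
  let ?R = "zero_outside I (second_diff e ?W)"
  have W: "finite_support ?W" using I by (rule finite_support_zero_outside)
  have R: "finite_support ?R" using I by (rule finite_support_zero_outside)
  have "?R \<noteq> (\<lambda>_. 0)"
  proof
    assume R0: "?R = (\<lambda>_. 0)"
    have "Sum_any (\<lambda>x. ?W x * second_diff e ?W x) = Sum_any (\<lambda>x. ?W x * ?R x)"
      by (rule Sum_any.cong) (simp add: zero_outside_def)
    then have "Sum_any (\<lambda>x. fwd_diff e ?W x * fwd_diff e ?W x) = 0"
      using summation_by_parts[OF W, where e=e and u="?W"] R0 by simp
    then have "fwd_diff e ?W = (\<lambda>_. 0)"
      by (intro Sum_any_square_eq_0 finite_support_fwd_diff W)
    then have "?W = (\<lambda>_. 0)" by (rule fwd_diff_eq_0_imp_zero[OF W \<open>e \<noteq> 0\<close>])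
    then show False using nonzero by (metis zero_outside_def)
  qed
  then have "Sum_any (\<lambda>x. ?R x * ?R x) \<noteq> 0" using Sum_any_square_eq_0[OF R] by blast
  then show ?thesis
    using Sum_any_square_nonneg[of ?R] Sum_any_second_diff_restricted[OF I, of w e ?W] by simp
qed

section \<open>Matrices of linear operators\<close>

definition linear_op :: "(('a \<Rightarrow> real) \<Rightarrow> 'b \<Rightarrow> real) \<Rightarrow> bool" where
  "linear_op L \<longleftrightarrow>
     (\<forall>(A :: 'a set) c g. L (\<lambda>z. \<Sum>y\<in>A. c y * g y z) = (\<lambda>x. \<Sum>y\<in>A. c y * L (g y) x))"

lemma linear_op_second_diff: "linear_op (second_diff e)"
  by (simp add: linear_op_def second_diff_def fun_eq_iff sum_distrib_left algebra_simps
      flip: sum_subtractf sum.distrib)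

lemma linear_op_zero_outside: "linear_op (zero_outside I)"
  by (simp add: linear_op_def zero_outside_def fun_eq_iff)

lemma linear_op_compose:
  fixes L M :: "('a \<Rightarrow> real) \<Rightarrow> 'a \<Rightarrow> real"
  assumes "linear_op L" "linear_op M"
  shows "linear_op (\<lambda>u. L (M u))"
  unfolding linear_op_def
proof (intro allI)
  fix A :: "'a set" and c g
  show "L (M (\<lambda>z. \<Sum>y\<in>A. c y * g y z)) = (\<lambda>x. \<Sum>y\<in>A. c y * L (M (g y)) x)"
    using assms[unfolded linear_op_def, rule_format, where A=A and c=c] by simp
qed

lemma linear_op_divide: "linear_op L \<Longrightarrow> linear_op (\<lambda>u x. L u x / c)"
  by (simp add: linear_op_def fun_eq_iff sum_divide_distrib)

lemma spd_on_cong: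
  "(\<And>x y. x \<in> I \<Longrightarrow> y \<in> I \<Longrightarrow> M x y = N x y) \<Longrightarrow> spd_on I M = spd_on I N"
  by (simp add: spd_on_def cong: sum.cong)

lemma spd_on_scale:
  assumes "spd_on I M" "c > 0"
  shows "spd_on I (\<lambda>x y. c * M x y)"
proof -
  have "(\<Sum>x\<in>I. \<Sum>y\<in>I. v x * (c * M x y) * v y) = c * (\<Sum>x\<in>I. \<Sum>y\<in>I. v x * M x y * v y)" for v
    by (simp add: sum_distrib_left algebra_simps)
  then show ?thesis using assms by (simp add: spd_on_def)
qed

lemma spd_on_operator_matrix:
  fixes L :: "('a \<Rightarrow> real) \<Rightarrow> 'a \<Rightarrow> real"
  assumes I: "finite I" and L: "linear_op L"
    and symmetric: "\<And>u w. Sum_any (\<lambda>x. zero_outside I u x * L (zero_outside I w) x)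
                         = Sum_any (\<lambda>x. zero_outside I w x * L (zero_outside I u) x)"
    and positive: "\<And>w. \<exists>x\<in>I. w x \<noteq> 0 \<Longrightarrow> Sum_any (\<lambda>x. zero_outside I w x * L (zero_outside I w) x) > 0"
  shows "spd_on I (\<lambda>x y. L (\<lambda>z. if z = y then 1 else 0) x)"
proof -
  define \<delta> where "\<delta> y z = (if z = y then 1 else 0 :: real)" for y z :: 'a
  have \<delta>_I: "zero_outside I (\<delta> y) = \<delta> y" if "y \<in> I" for y
    using that by (auto simp: zero_outside_def \<delta>_def fun_eq_iff)
  have \<delta>_mult: "\<delta> y z * r = (if z = y then r else 0)" for y z r
    by (simp add: \<delta>_def)
  have entry: "L (\<delta> y) x = Sum_any (\<lambda>z. zero_outside I (\<delta> x) z * L (zero_outside I (\<delta> y)) z)"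
    if "x \<in> I" "y \<in> I" for x y
    using that I by (simp add: Sum_any_zero_outside_mult \<delta>_I \<delta>_mult)
  have sym: "L (\<delta> y) x = L (\<delta> x) y" if "x \<in> I" "y \<in> I" for x y
    using entry[OF that] entry[OF that(2,1)] symmetric by simp
  have combination: "(\<lambda>z. \<Sum>y\<in>I. v y * \<delta> y z) = zero_outside I v" for v
    using I by (simp add: fun_eq_iff zero_outside_def \<delta>_mult mult.commute[of "v _"])
  have quadratic_form: "(\<Sum>x\<in>I. \<Sum>y\<in>I. v x * L (\<delta> y) x * v y)
      = Sum_any (\<lambda>x. zero_outside I v x * L (zero_outside I v) x)" for v
  proof -
    have "(\<Sum>x\<in>I. \<Sum>y\<in>I. v x * L (\<delta> y) x * v y) = (\<Sum>x\<in>I. v x * (\<Sum>y\<in>I. v y * L (\<delta> y) x))"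
      by (simp add: sum_distrib_left algebra_simps)
    also have "\<dots> = (\<Sum>x\<in>I. v x * L (zero_outside I v) x)"
      using L unfolding linear_op_def by (simp flip: combination)
    finally show ?thesis using I by (simp add: Sum_any_zero_outside_mult)
  qed
  show ?thesis
    unfolding spd_on_def \<delta>_def[symmetric] using sym quadratic_form positive by simp
qed

section \<open>The grid and its ghost extension\<close>

lemma d2_eq_second_diff: "d2 h i V x = second_diff (h i *\<^sub>R axis i 1) V x / h i ^ 2"
  by (simp add: d2_def second_diff_def)

lemma d2tilde_minus_d2hat:
  assumes "h i \<noteq> 0" "h j \<noteq> 0"
  shows "d2tilde h i j V x - d2hat h i j V x
       = second_diff (h i *\<^sub>R axis i 1) (second_diff (h j *\<^sub>R axis j 1) V) x / (2 * h i * h j)"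
  using assms
  by (simp add: d2tilde_def d2hat_def dp_def dm_def second_diff_def field_simps)

lemma Dbar0_eq: "Dbar0 a b J i j x y = (Dhat0 a b J i j x y + Dtilde0 a b J i j x y) / 2"
  by (simp add: Dbar0_def Dhat0_def Dtilde0_def opmat_def d2bar_def)

locale grid =
  fixes a b :: "real^'n" and J :: "'n \<Rightarrow> nat"
  assumes lower_less_upper: "\<And>k. a$k < b$k" and two_le_J: "\<And>k. 2 \<le> J k"
begin

abbreviation h :: "'n \<Rightarrow> real" where "h \<equiv> hstep a b J"

abbreviation E :: "'n \<Rightarrow> real^'n" where "E k \<equiv> h k *\<^sub>R axis k 1"

abbreviation I :: "(real^'n) set" where "I \<equiv> inodes a b J"

lemma h_pos: "0 < h k"
  using lower_less_upper[of k] two_le_J[of k] by (simp add: hstep_def)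

lemma upper_eq: "b$k = a$k + (real (J k) - 1) * h k"
  using two_le_J[of k] by (simp add: hstep_def)

lemma mesh_iff: "p \<in> mesh a b J \<longleftrightarrow> (\<forall>k. \<exists>n. 1 \<le> n \<and> n \<le> J k \<and> p$k = a$k + (real n - 1) * h k)"
proof
  assume "\<forall>k. \<exists>n. 1 \<le> n \<and> n \<le> J k \<and> p$k = a$k + (real n - 1) * h k"
  then obtain \<alpha> where \<alpha>: "\<And>k. 1 \<le> \<alpha> k \<and> \<alpha> k \<le> J k \<and> p$k = a$k + (real (\<alpha> k) - 1) * h k"
    by metis
  then have "p = node a b J \<alpha>" by (simp add: node_def vec_eq_iff)
  then show "p \<in> mesh a b J" using \<alpha> by (auto simp: mesh_def)
qed (auto simp: mesh_def node_def)

lemma finite_mesh: "finite (mesh a b J)"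
proof -
  have "mesh a b J \<subseteq> node a b J ` PiE UNIV (\<lambda>k. {..J k})"
    by (auto simp: mesh_def PiE_UNIV_domain)
  then show ?thesis by (rule finite_subset) (simp add: finite_PiE)
qed

lemma finite_inodes: "finite I"
  using finite_mesh by (simp add: inodes_def)

lemma inodes_coordinate: "x \<in> I \<Longrightarrow> a$k < x$k \<and> x$k < b$k"
  by (simp add: inodes_def mem_box_cart)

lemma mesh_in_cbox:
  assumes "p \<in> mesh a b J"
  shows "a$k \<le> p$k \<and> p$k \<le> b$k"
proof -
  obtain n where "1 \<le> n" "n \<le> J k" "p$k = a$k + (real n - 1) * h k"
    using assms by (auto simp: mesh_iff)
  then show ?thesis using h_pos[of k] upper_eq[of k] by (simp add: mult_right_mono)
qed

lemma mesh_neighbour: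
  assumes x: "x \<in> I" and step: "\<And>k. (p - x)$k \<in> {- h k, 0, h k}"
  shows "p \<in> mesh a b J"
  unfolding mesh_iff
proof
  fix k
  obtain n where n: "1 \<le> n" "n \<le> J k" "x$k = a$k + (real n - 1) * h k"
    using x by (auto simp: inodes_def mesh_iff)
  have "1 < real n" "real n < real (J k)"
    using inodes_coordinate[OF x, of k] n(3) upper_eq[of k] h_pos[of k] by (simp_all add: field_simps)
  then have "2 \<le> n" "n + 1 \<le> J k" by linarith+
  consider "p$k = x$k - h k" | "p$k = x$k" | "p$k = x$k + h k" using step[of k] by force
  then show "\<exists>n. 1 \<le> n \<and> n \<le> J k \<and> p$k = a$k + (real n - 1) * h k"
  proof cases
    case 1
    have "real (n - 1) = real n - 1" using n(1) by (simp add: of_nat_diff)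
    then have "p$k = a$k + (real (n - 1) - 1) * h k"
      using 1 n(3) by (simp add: algebra_simps)
    moreover have "1 \<le> n - 1" "n - 1 \<le> J k" using \<open>2 \<le> n\<close> \<open>n \<le> J k\<close> by auto
    ultimately show ?thesis by blast
  next
    case 2
    with n show ?thesis by (intro exI[of _ n]) simp
  next
    case 3
    with \<open>n + 1 \<le> J k\<close> n(3) show ?thesis
      by (intro exI[of _ "n + 1"]) (simp add: algebra_simps)
  qed
qed

lemma mesh_frontier:
  assumes "p \<in> mesh a b J" "p \<notin> box a b"
  shows "p \<in> frontier (box a b)"
proof -
  have "(1/2) *\<^sub>R (a + b) \<in> box a b" using lower_less_upper by (auto simp: mem_box_cart)
  then show ?thesis
    using assms mesh_in_cbox by (auto simp: frontier_box mem_box_cart(2))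
qed

lemma frontier_not_box: "p \<in> frontier (box a b) \<Longrightarrow> p \<notin> box a b"
  by (auto simp: frontier_box split: if_splits)

lemma ghost_ext_on_mesh:
  assumes "ghost_ext a b J v V" "p \<in> mesh a b J"
  shows "V p = zero_outside I v p"
  using assms mesh_frontier by (auto simp: ghost_ext_def zero_outside_def inodes_def)

lemma boundary_neighbour_coordinate:
  assumes x: "x \<in> I" and e: "e \<in> {E i, - E i}" and out: "x + e \<notin> box a b"
  shows "(e$i = h i \<and> b$i \<le> x$i + h i) \<or> (e$i = - h i \<and> x$i - h i \<le> a$i)"
proof -
  have not_inside: "\<not> (a$i < (x + e)$i \<and> (x + e)$i < b$i)"
  proof
    assume inside: "a$i < (x + e)$i \<and> (x + e)$i < b$i"
    have "a$k < (x + e)$k \<and> (x + e)$k < b$k" for k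
      using inside inodes_coordinate[OF x, of k] e by (cases "k = i") (auto simp: axis_def)
    then show False using out by (simp add: mem_box_cart)
  qed
  from e consider "e$i = h i" | "e$i = - h i" by auto
  then show ?thesis
  proof cases
    case 1
    then show ?thesis using not_inside inodes_coordinate[OF x, of i] h_pos[of i] by simp
  next
    case 2
    then show ?thesis using not_inside inodes_coordinate[OF x, of i] h_pos[of i] by simp
  qed
qed

lemma beyond_boundary:
  assumes x: "x \<in> I" and e: "e \<in> {E i, - E i}" and out: "x + e \<notin> box a b"
    and q: "q$i = x$i + t * e$i"
  shows "1 \<le> t \<Longrightarrow> q \<notin> box a b" and "1 < t \<Longrightarrow> q \<notin> mesh a b J"
proof -
  consider "e$i = h i" "b$i \<le> x$i + h i" | "e$i = - h i" "x$i - h i \<le> a$i"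
    using boundary_neighbour_coordinate[OF x e out] by blast
  note cases = this
  show "q \<notin> box a b" if "1 \<le> t"
  proof -
    have "h i \<le> t * h i" using that h_pos[of i] by simp
    with cases have "\<not> (a$i < q$i \<and> q$i < b$i)" by cases (simp_all add: q)
    then show ?thesis by (auto simp: mem_box_cart)
  qed
  show "q \<notin> mesh a b J" if "1 < t"
  proof -
    have "h i < t * h i" using that h_pos[of i] by simp
    with cases have "\<not> (a$i \<le> q$i \<and> q$i \<le> b$i)" by cases (simp_all add: q)
    then show ?thesis using mesh_in_cbox by blast
  qed
qed

lemma tangential_neighbour_zero:
  assumes V0: "\<forall>p\<in>mesh a b J \<inter> frontier (box a b). V p = 0"
    and x: "x \<in> I" and e: "e \<in> {E i, - E i}" and out: "x + e \<notin> box a b"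
    and c: "c \<in> {- E k, 0, E k}" and "k \<noteq> i"
  shows "V (x + e + c) = 0"
proof -
  have "x + e + c \<in> mesh a b J"
    by (rule mesh_neighbour[OF x]) (use e c \<open>k \<noteq> i\<close> in \<open>auto simp: axis_def\<close>)
  moreover have "x + e + c \<notin> box a b"
    by (rule beyond_boundary(1)[OF x e out, of _ 1]) (use c \<open>k \<noteq> i\<close> in \<open>auto simp: axis_def\<close>)
  ultimately show ?thesis using V0 mesh_frontier by blast
qed

lemma lap_at_boundary_neighbour:
  assumes V0: "\<forall>p\<in>mesh a b J \<inter> frontier (box a b). V p = 0"
    and x: "x \<in> I" and e: "e \<in> {E i, - E i}" and out: "x + e \<notin> box a b"
  shows "lap_h h V (x + e) = second_diff e V (x + e) / h i ^ 2"
proof -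
  have "second_diff (E k) V (x + e) = 0" if "k \<noteq> i" for k
    using tangential_neighbour_zero[OF V0 x e out _ that, of "- E k"]
      tangential_neighbour_zero[OF V0 x e out _ that, of 0]
      tangential_neighbour_zero[OF V0 x e out _ that, of "E k"]
    by (simp add: second_diff_def)
  then have "lap_h h V (x + e) = (\<Sum>k\<in>UNIV. if k = i then second_diff (E i) V (x + e) / h i ^ 2 else 0)"
    unfolding lap_h_def d2_eq_second_diff by (intro sum.cong) auto
  also have "second_diff (E i) = second_diff e"
    using e by (auto simp: second_diff_uminus)
  finally show ?thesis by simp
qed

lemma ghost_condition:
  assumes V: "ghost_ext a b J v V" and x: "x \<in> I" and e: "e \<in> {E i, - E i}" and out: "x + e \<notin> I"
  shows "second_diff e V (x + e) = 0"
proof -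
  have mesh: "x + e \<in> mesh a b J"
    by (rule mesh_neighbour[OF x]) (use e in \<open>auto simp: axis_def\<close>)
  with out have not_box: "x + e \<notin> box a b" by (simp add: inodes_def)
  have "x + e + E i \<in> I \<or> x + e - E i \<in> I" using e x by auto
  then have "x + e \<in> Snodes a b J"
    using mesh mesh_frontier[OF mesh not_box] by (auto simp: Snodes_def)
  then have "lap_h h V (x + e) = 0" using V by (simp add: ghost_ext_def)
  then show ?thesis
    using lap_at_boundary_neighbour[OF _ x e not_box] V h_pos[of i] by (simp add: ghost_ext_def)
qed

lemma zero_outside_off_mesh: "q \<notin> mesh a b J \<Longrightarrow> zero_outside I v q = 0"
  by (simp add: zero_outside_def inodes_def)

lemma SnodesE:
  assumes "z \<in> Snodes a b J"
  obtains i x e where "x \<in> I" "e \<in> {E i, - E i}" "z = x + e"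
proof -
  obtain i where "z + E i \<in> I \<or> z - E i \<in> I" using assms by (auto simp: Snodes_def)
  then show ?thesis
  proof
    assume "z + E i \<in> I"
    then show ?thesis by (intro that[where i=i and x="z + E i" and e="- E i"]) auto
  next
    assume "z - E i \<in> I"
    then show ?thesis by (intro that[where i=i and x="z - E i" and e="E i"]) auto
  qed
qed

lemma reflection_sum_beyond_boundary:
  assumes x: "x \<in> I" and e: "e \<in> {E i, - E i}" and out: "x + e \<notin> box a b"
  shows "(\<Sum>k\<in>UNIV. zero_outside I v (x + e + e - 2 *\<^sub>R E k) + zero_outside I v (x + e + e + 2 *\<^sub>R E k))
       = v x"
proof -
  have "zero_outside I v (x + e + e - 2 *\<^sub>R E k) + zero_outside I v (x + e + e + 2 *\<^sub>R E k)
      = (if k = i then v x else 0)" for k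
  proof (cases "k = i")
    case True
    have far: "zero_outside I v (x + e + e + e + e) = 0"
      by (rule zero_outside_off_mesh, rule beyond_boundary(2)[OF x e out, of _ 4]) simp_all
    have near: "zero_outside I v x = v x" using x by (simp add: zero_outside_def)
    from e True consider "E k = e" | "E k = - e" by force
    then show ?thesis
    proof cases
      case 1
      then show ?thesis using far near True by (simp add: scaleR_2 algebra_simps)
    next
      case 2
      then show ?thesis using far near True by (simp add: scaleR_2 algebra_simps)
    qed
  next
    case False
    have "zero_outside I v (x + e + e + c) = 0" if "c \<in> {- 2 *\<^sub>R E k, 2 *\<^sub>R E k}" for c
      by (rule zero_outside_off_mesh, rule beyond_boundary(2)[OF x e out, of _ 2])
        (use that False in \<open>auto simp: axis_def\<close>)
    then show ?thesis using False by (simp add: diff_conv_add_uminus del: add_uminus_conv_diff)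
  qed
  then show ?thesis by simp
qed

lemma ghost_ext_exists: "\<exists>V. ghost_ext a b J v V"
proof -
  \<comment> \<open>The ghost value at x + 2e is -v x, the odd reflection through the boundary node x + e.\<close>
  define V where "V p = (if p \<in> mesh a b J then zero_outside I v p
      else - (\<Sum>k\<in>UNIV. zero_outside I v (p - 2 *\<^sub>R E k) + zero_outside I v (p + 2 *\<^sub>R E k)))" for p
  have interior: "\<forall>x\<in>I. V x = v x"
    by (simp add: V_def zero_outside_def inodes_def)
  have boundary: "\<forall>p\<in>mesh a b J \<inter> frontier (box a b). V p = 0"
    using frontier_not_box by (auto simp: V_def zero_outside_def inodes_def)
  have "lap_h h V z = 0" if z: "z \<in> Snodes a b J" for z
  proof -
    obtain i x e where x: "x \<in> I" and e: "e \<in> {E i, - E i}" and z_eq: "z = x + e"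
      using SnodesE[OF z] .
    have z_boundary: "z \<in> mesh a b J \<inter> frontier (box a b)" using z by (simp add: Snodes_def)
    then have out: "x + e \<notin> box a b" using frontier_not_box z_eq by blast
    have ghost: "V (x + e + e) = - v x"
      using beyond_boundary(2)[OF x e out, of "x + e + e" 2] reflection_sum_beyond_boundary[OF x e out]
      by (simp add: V_def)
    have "lap_h h V z = second_diff e V (x + e) / h i ^ 2"
      using lap_at_boundary_neighbour[OF boundary x e out] z_eq by simp
    also have "second_diff e V (x + e) = 0"
      using ghost interior x boundary z_boundary z_eq by (simp add: second_diff_def)
    finally show ?thesis by simp
  qed
  then show ?thesis using interior boundary unfolding ghost_ext_def by blast
qed

lemma ghost_ext_near_interior:
  assumes "ghost_ext a b J v V" "x \<in> I" "\<And>k. (p - x)$k \<in> {- h k, 0, h k}"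
  shows "V p = zero_outside I v p"
  using assms by (intro ghost_ext_on_mesh mesh_neighbour)

lemma second_diff_ghost_ext_near_interior:
  assumes V: "ghost_ext a b J v V" and x: "x \<in> I" and c: "c \<in> {- E i, 0, E i}"
  shows "second_diff (E i) V (x + c) = zero_outside I (second_diff (E i) (zero_outside I v)) (x + c)"
proof (cases "x + c \<in> I")
  case True
  then show ?thesis
    by (simp add: zero_outside_def, intro second_diff_cong ghost_ext_near_interior[OF V True])
      (auto simp: axis_def)
next
  case False
  with x c have "c \<in> {E i, - E i}" by auto
  then have "second_diff c V (x + c) = 0" by (rule ghost_condition[OF V x _ False])
  moreover have "second_diff (E i) = second_diff c"
    using \<open>c \<in> {E i, - E i}\<close> by (auto simp: second_diff_uminus)
  ultimately show ?thesis using False by (simp add: zero_outside_def)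
qed

text \<open>The operator represented by Dtilde0 - Dhat0, with the ghost values eliminated.\<close>

definition tilde_minus_hat_op :: "'n \<Rightarrow> 'n \<Rightarrow> (real^'n \<Rightarrow> real) \<Rightarrow> real^'n \<Rightarrow> real" where
  "tilde_minus_hat_op i j u x =
     (if i = j then second_diff (E i) (zero_outside I (second_diff (E i) u)) x
      else second_diff (E i) (second_diff (E j) u) x) / (2 * h i * h j)"

lemma d2tilde_minus_d2hat_interior:
  assumes V: "ghost_ext a b J v V" and x: "x \<in> I"
  shows "d2tilde h i j V x - d2hat h i j V x = tilde_minus_hat_op i j (zero_outside I v) x"
proof -
  have h: "h i \<noteq> 0" "h j \<noteq> 0" using h_pos[of i] h_pos[of j] by simp_all
  have "d2tilde h i j V x - d2hat h i j V x = second_diff (E i) (second_diff (E j) V) x / (2 * h i * h j)"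
    using d2tilde_minus_d2hat[OF h] .
  also have "second_diff (E i) (second_diff (E j) V) x = tilde_minus_hat_op i j (zero_outside I v) x * (2 * h i * h j)"
  proof (cases "i = j")
    case True
    have "second_diff (E i) (second_diff (E i) V) x
        = second_diff (E i) (zero_outside I (second_diff (E i) (zero_outside I v))) x"
      using second_diff_ghost_ext_near_interior[OF V x, of "- E i" i]
        second_diff_ghost_ext_near_interior[OF V x, of 0 i]
        second_diff_ghost_ext_near_interior[OF V x, of "E i" i]
      by (intro second_diff_cong) simp_all
    then show ?thesis using True h by (simp add: tilde_minus_hat_op_def)
  next
    case False
    have "second_diff (E i) (second_diff (E j) V) x = second_diff (E i) (second_diff (E j) (zero_outside I v)) x"
      by (intro second_diff_cong ghost_ext_near_interior[OF V x]) (use False in \<open>simp_all add: axis_def\<close>)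
    then show ?thesis using False h by (simp add: tilde_minus_hat_op_def)
  qed
  finally show ?thesis using h by simp
qed

lemma linear_op_tilde_minus_hat_op: "linear_op (tilde_minus_hat_op i j)"
proof (cases "i = j")
  case True
  then have "tilde_minus_hat_op i j
      = (\<lambda>u x. second_diff (E i) (zero_outside I (second_diff (E i) u)) x / (2 * h i * h j))"
    by (simp add: fun_eq_iff tilde_minus_hat_op_def)
  then show ?thesis
    using linear_op_divide[OF linear_op_compose[OF linear_op_second_diff
          linear_op_compose[OF linear_op_zero_outside linear_op_second_diff]]]
    by simp
next
  case False
  then have "tilde_minus_hat_op i j = (\<lambda>u x. second_diff (E i) (second_diff (E j) u) x / (2 * h i * h j))"
    by (simp add: fun_eq_iff tilde_minus_hat_op_def)
  then show ?thesis
    using linear_op_divide[OF linear_op_compose[OF linear_op_second_diff linear_op_second_diff]]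
    by simp
qed

lemma Sum_any_mult_tilde_minus_hat_op:
  "Sum_any (\<lambda>x. u x * tilde_minus_hat_op i j w x)
     = (if i = j then Sum_any (\<lambda>x. u x * second_diff (E i) (zero_outside I (second_diff (E i) w)) x)
        else Sum_any (\<lambda>x. u x * second_diff (E i) (second_diff (E j) w) x)) / (2 * h i * h j)"
  by (simp add: tilde_minus_hat_op_def times_divide_eq_right Sum_any_divide)

lemma tilde_minus_hat_op_symmetric:
  "Sum_any (\<lambda>x. zero_outside I u x * tilde_minus_hat_op i j (zero_outside I w) x)
     = Sum_any (\<lambda>x. zero_outside I w x * tilde_minus_hat_op i j (zero_outside I u) x)"
proof (cases "i = j")
  case True
  then show ?thesis
    using Sum_any_second_diff_restricted[OF finite_inodes, of u "E i" "zero_outside I w"]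
      Sum_any_second_diff_restricted[OF finite_inodes, of w "E i" "zero_outside I u"]
    by (simp add: Sum_any_mult_tilde_minus_hat_op mult.commute)
next
  case False
  have R: "finite_support (zero_outside I f)" for f
    by (rule finite_support_zero_outside[OF finite_inodes])
  show ?thesis
    using False Sum_any_mixed_second_diff[OF R, of u "E i" "E j" "zero_outside I w"]
      Sum_any_mixed_second_diff[OF R, of w "E i" "E j" "zero_outside I u"]
    by (simp add: Sum_any_mult_tilde_minus_hat_op mult.commute)
qed

lemma tilde_minus_hat_op_positive:
  assumes "\<exists>x\<in>I. w x \<noteq> 0"
  shows "Sum_any (\<lambda>x. zero_outside I w x * tilde_minus_hat_op i j (zero_outside I w) x) > 0"
proof -
  have E_nonzero: "E k \<noteq> 0" for k using h_pos[of k] by simp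
  have "zero_outside I w \<noteq> (\<lambda>_. 0)" using assms by (auto simp: zero_outside_def fun_eq_iff)
  then show ?thesis
    using Sum_any_second_diff_restricted_pos[OF finite_inodes E_nonzero assms]
      Sum_any_mixed_second_diff_pos[OF finite_support_zero_outside[OF finite_inodes] _ E_nonzero E_nonzero]
      h_pos[of i] h_pos[of j]
    by (simp add: Sum_any_mult_tilde_minus_hat_op)
qed

lemma Dtilde0_minus_Dhat0:
  assumes "x \<in> I" "y \<in> I"
  shows "Dtilde0 a b J i j x y - Dhat0 a b J i j x y = tilde_minus_hat_op i j (\<lambda>z. if z = y then 1 else 0) x"
proof -
  let ?\<delta> = "\<lambda>z::real^'n. if z = y then 1 else 0 :: real"
  have "ghost_ext a b J ?\<delta> (extend a b J ?\<delta>)"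
    unfolding extend_def by (rule someI_ex[OF ghost_ext_exists])
  moreover have "zero_outside I ?\<delta> = ?\<delta>" using assms(2) by (auto simp: zero_outside_def)
  ultimately show ?thesis
    using d2tilde_minus_d2hat_interior[OF _ assms(1)] by (simp add: Dtilde0_def Dhat0_def opmat_def)
qed

lemma spd_Dtilde0_minus_Dhat0: "spd_on I (\<lambda>x y. Dtilde0 a b J i j x y - Dhat0 a b J i j x y)"
proof -
  have "spd_on I (\<lambda>x y. tilde_minus_hat_op i j (\<lambda>z. if z = y then 1 else 0) x)"
    by (rule spd_on_operator_matrix[OF finite_inodes linear_op_tilde_minus_hat_op
          tilde_minus_hat_op_symmetric tilde_minus_hat_op_positive])
  then show ?thesis by (subst spd_on_cong) (simp_all add: Dtilde0_minus_Dhat0)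
qed

end

theorem lemma2p5:
  fixes a b :: "real^'n" and J :: "'n \<Rightarrow> nat"
  assumes "CARD('n) \<ge> 2"
    and "\<forall>i. a$i < b$i"
    and "\<forall>i. J i \<ge> 2"
  shows "\<forall>i j.
      spd_on (inodes a b J) (\<lambda>x y. Dtilde0 a b J i j x y - Dhat0 a b J i j x y)
    \<and> spd_on (inodes a b J) (\<lambda>x y. (- Dhat0 a b J i j x y) - (- Dbar0 a b J i j x y))
    \<and> spd_on (inodes a b J) (\<lambda>x y. (- Dbar0 a b J i j x y) - (- Dtilde0 a b J i j x y))"
proof -
  interpret grid a b J using assms(2,3) by unfold_locales auto
  have "(\<lambda>x y. (- Dhat0 a b J i j x y) - (- Dbar0 a b J i j x y))
        = (\<lambda>x y. 1/2 * (Dtilde0 a b J i j x y - Dhat0 a b J i j x y))"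
    and "(\<lambda>x y. (- Dbar0 a b J i j x y) - (- Dtilde0 a b J i j x y))
        = (\<lambda>x y. 1/2 * (Dtilde0 a b J i j x y - Dhat0 a b J i j x y))" for i j
    by (simp_all add: fun_eq_iff Dbar0_eq field_simps)
  then show ?thesis
    using spd_Dtilde0_minus_Dhat0 spd_on_scale[OF spd_Dtilde0_minus_Dhat0, of "1/2"] by simp
qed

end
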